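(* There exist finitely presented amenable inverse monoids that are not sofic.
   Context: A monoid is a set with an associative binary operation admitting an identity element. A semigroup $S$ is an inverse semigroup if for every $s \in S$ there is a unique $x \in S$ with $s = sxs$ and $x = xsx$; an inverse monoid is an inverse semigroup that is a monoid. A monoid $M$ is amenable if there is a mean (a positive linear functional of norm one taking value $1$ on the constant function $1$) on $\ell^\infty(M)$ that is invariant under left and right translations by elements of $M$. For a non-empty finite set $X$, $\mathrm{Map}(X)$ denotes the monoid of all maps $X \to X$ under composition (identity $\mathrm{Id}_X$), with the Hamming metric $d_X(f,g) = |\{x \in X : f(x) \neq g(x)\}|/|X|$. For a monoid $M$, finite $K \subset M$ and $\varepsilon,\alpha>0$, a map $\varphi\colon M \to \mathrm{Map}(X)$ is a $(K,\varepsilon)$-morphism if $d_X(\varphi(k_1k_2),\varphi(k_1)\varphi(k_2)) \le \varepsilon$ for all $k_1,k_2 \in K$ and $d_X(\varphi(1_M),\mathrm{Id}_X) \le \varepsilon$; it is $(K,\alpha)$-injective if $d_X(\varphi(k_1),\varphi(k_2)) \ge \alpha$ for all distinct $k_1,k_2 \in K$. $M$ is sofic if for every finite $K \subset M$ and every $\varepsilon>0$ there exist a non-empty finite set $X$ and a $(K,1-\varepsilon)$-injective $(K,\varepsilon)$-morphism $\varphi\colon M \to \mathrm{Map}(X)$. *)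

theory Defs
  imports Complex_Main "HOL-Algebra.Group"
begin

definition inverse_monoid :: "('a, 'b) monoid_scheme \<Rightarrow> bool" where
  "inverse_monoid M \<longleftrightarrow> monoid M \<and>
     (\<forall>s \<in> carrier M. \<exists>!x. x \<in> carrier M \<and>
        s = s \<otimes>\<^bsub>M\<^esub> x \<otimes>\<^bsub>M\<^esub> s \<and> x = x \<otimes>\<^bsub>M\<^esub> s \<otimes>\<^bsub>M\<^esub> x)"

definition linf_bdd :: "('a, 'b) monoid_scheme \<Rightarrow> ('a \<Rightarrow> real) \<Rightarrow> bool" where
  "linf_bdd M f \<longleftrightarrow> (\<exists>C. \<forall>x \<in> carrier M. \<bar>f x\<bar> \<le> C)"

definition linf_norm :: "('a, 'b) monoid_scheme \<Rightarrow> ('a \<Rightarrow> real) \<Rightarrow> real" where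
  "linf_norm M f = (SUP x \<in> carrier M. \<bar>f x\<bar>)"

definition is_mean :: "('a, 'b) monoid_scheme \<Rightarrow> (('a \<Rightarrow> real) \<Rightarrow> real) \<Rightarrow> bool" where
  "is_mean M \<mu> \<longleftrightarrow>
     (\<forall>f g. linf_bdd M f \<longrightarrow> (\<forall>x \<in> carrier M. f x = g x) \<longrightarrow> \<mu> f = \<mu> g) \<and>
     (\<forall>f g. linf_bdd M f \<longrightarrow> linf_bdd M g \<longrightarrow> \<mu> (\<lambda>x. f x + g x) = \<mu> f + \<mu> g) \<and>
     (\<forall>c f. linf_bdd M f \<longrightarrow> \<mu> (\<lambda>x. c * f x) = c * \<mu> f) \<and>
     (\<forall>f. linf_bdd M f \<longrightarrow> (\<forall>x \<in> carrier M. 0 \<le> f x) \<longrightarrow> 0 \<le> \<mu> f) \<and>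
     (\<forall>f. linf_bdd M f \<longrightarrow> \<bar>\<mu> f\<bar> \<le> linf_norm M f) \<and>
     \<mu> (\<lambda>_. 1) = 1"

definition amenable_monoid :: "('a, 'b) monoid_scheme \<Rightarrow> bool" where
  "amenable_monoid M \<longleftrightarrow> (\<exists>\<mu>. is_mean M \<mu> \<and>
     (\<forall>a \<in> carrier M. \<forall>f. linf_bdd M f \<longrightarrow>
        \<mu> (\<lambda>x. f (a \<otimes>\<^bsub>M\<^esub> x)) = \<mu> f \<and> \<mu> (\<lambda>x. f (x \<otimes>\<^bsub>M\<^esub> a)) = \<mu> f))"

text \<open>Finite sets X are taken as finite sets of natural numbers (no loss of generality);
  Map(X) is represented by functions nat => nat mapping X into X, compared only on X.\<close>

definition hamming :: "nat set \<Rightarrow> (nat \<Rightarrow> nat) \<Rightarrow> (nat \<Rightarrow> nat) \<Rightarrow> real" where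
  "hamming X f g = real (card {x \<in> X. f x \<noteq> g x}) / real (card X)"

definition sofic_monoid :: "('a, 'b) monoid_scheme \<Rightarrow> bool" where
  "sofic_monoid M \<longleftrightarrow>
     (\<forall>K \<epsilon>. finite K \<longrightarrow> K \<subseteq> carrier M \<longrightarrow> 0 < \<epsilon> \<longrightarrow>
        (\<exists>(X :: nat set) (\<phi> :: 'a \<Rightarrow> nat \<Rightarrow> nat).
           finite X \<and> X \<noteq> {} \<and>
           (\<forall>m \<in> carrier M. \<phi> m ` X \<subseteq> X) \<and>
           (\<forall>k1 \<in> K. \<forall>k2 \<in> K.
              hamming X (\<phi> (k1 \<otimes>\<^bsub>M\<^esub> k2)) (\<phi> k1 \<circ> \<phi> k2) \<le> \<epsilon>) \<and>
           hamming X (\<phi> \<one>\<^bsub>M\<^esub>) id \<le> \<epsilon> \<and>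
           (\<forall>k1 \<in> K. \<forall>k2 \<in> K. k1 \<noteq> k2 \<longrightarrow> hamming X (\<phi> k1) (\<phi> k2) \<ge> 1 - \<epsilon>)))"

inductive pres_cong :: "(nat list \<times> nat list) set \<Rightarrow> nat list \<Rightarrow> nat list \<Rightarrow> bool"
  for R where
    pc_rel: "(u, v) \<in> R \<Longrightarrow> pres_cong R u v"
  | pc_refl: "pres_cong R u u"
  | pc_sym: "pres_cong R u v \<Longrightarrow> pres_cong R v u"
  | pc_trans: "pres_cong R u v \<Longrightarrow> pres_cong R v w \<Longrightarrow> pres_cong R u w"
  | pc_ctx: "pres_cong R u v \<Longrightarrow> pres_cong R (a @ u @ b) (a @ v @ b)"

definition pres_class :: "nat set \<Rightarrow> (nat list \<times> nat list) set \<Rightarrow> nat list \<Rightarrow> nat list set" where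
  "pres_class A R u = {v \<in> lists A. pres_cong R u v}"

definition presented_monoid :: "nat set \<Rightarrow> (nat list \<times> nat list) set \<Rightarrow> nat list set monoid" where
  "presented_monoid A R =
     \<lparr> carrier = pres_class A R ` lists A,
       mult = (\<lambda>P Q. pres_class A R ((SOME u. u \<in> P) @ (SOME v. v \<in> Q))),
       one = pres_class A R [] \<rparr>"

definition finite_presentation :: "nat set \<Rightarrow> (nat list \<times> nat list) set \<Rightarrow> bool" where
  "finite_presentation A R \<longleftrightarrow> finite A \<and> finite R \<and> R \<subseteq> lists A \<times> lists A"

end

theory Submission
  imports Defs
begin

text \<open>Take the bicyclic monoid \<open>\<langle>a, b | ab = 1\<rangle>\<close> with a zero adjoined; it is an inverse monoid
  and is finitely presented by the relations \<open>ab = 1\<close>, \<open>za = az = zb = bz = zz = z\<close>.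
  Evaluation at the zero is a mean invariant under all translations, so it is amenable.
  It is not sofic because sofic monoids are directly finite: if \<open>\<phi>(a)\<phi>(b)\<close> is close to the
  identity of a finite set \<open>X\<close>, then \<open>\<phi>(b)\<close> is injective on most of \<open>X\<close>, hence its image
  covers most of \<open>X\<close>, and there \<open>\<phi>(b)\<phi>(a)\<close> is the identity too; but \<open>ba \<noteq> 1\<close>.\<close>

lemma pres_cong_append:
  assumes "pres_cong R u u'" and "pres_cong R v v'"
  shows "pres_cong R (u @ v) (u' @ v')"
proof -
  have "pres_cong R ([] @ u @ v) ([] @ u' @ v)" by (rule pc_ctx[OF assms(1)])
  moreover have "pres_cong R (u' @ v @ []) (u' @ v' @ [])" by (rule pc_ctx[OF assms(2)])
  ultimately show ?thesis by (auto intro: pc_trans)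
qed

lemma pres_cong_Cons: "pres_cong R u v \<Longrightarrow> pres_cong R (c # u) (c # v)"
  using pres_cong_append[OF pc_refl] by (metis append_Cons append_Nil)

lemma pres_cong_rel_prefix: "(u, v) \<in> R \<Longrightarrow> pres_cong R (u @ w) (v @ w)"
  by (rule pres_cong_append[OF pc_rel pc_refl])

lemma pres_class_self: "u \<in> lists A \<Longrightarrow> u \<in> pres_class A R u"
  by (simp add: pres_class_def pc_refl)

lemma pres_class_eq_iff:
  assumes "u \<in> lists A" "v \<in> lists A"
  shows "pres_class A R u = pres_class A R v \<longleftrightarrow> pres_cong R u v"
proof
  assume "pres_class A R u = pres_class A R v"
  then show "pres_cong R u v"
    using pres_class_self[OF assms(2)] by (auto simp: pres_class_def)
qed (auto simp: pres_class_def intro: pc_sym pc_trans)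

lemma presented_monoid_mult:
  assumes u: "u \<in> lists A" and v: "v \<in> lists A"
  shows "pres_class A R u \<otimes>\<^bsub>presented_monoid A R\<^esub> pres_class A R v = pres_class A R (u @ v)"
proof -
  define u' where "u' = (SOME x. x \<in> pres_class A R u)"
  define v' where "v' = (SOME x. x \<in> pres_class A R v)"
  have "u' \<in> pres_class A R u" unfolding u'_def by (meson someI pres_class_self[OF u])
  moreover have "v' \<in> pres_class A R v" unfolding v'_def by (meson someI pres_class_self[OF v])
  ultimately have "u' @ v' \<in> lists A" "pres_cong R (u @ v) (u' @ v')"
    by (auto simp: pres_class_def intro: pres_cong_append)
  then have "pres_class A R (u' @ v') = pres_class A R (u @ v)"
    using pres_class_eq_iff u v by (metis append_in_lists_conv)
  then show ?thesis by (simp add: presented_monoid_def u'_def v'_def)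
qed

lemma presented_monoid_one: "\<one>\<^bsub>presented_monoid A R\<^esub> = pres_class A R []"
  by (simp add: presented_monoid_def)

lemma monoid_presented_monoid: "monoid (presented_monoid A R)"
proof (rule monoidI)
  show "\<one>\<^bsub>presented_monoid A R\<^esub> \<in> carrier (presented_monoid A R)"
    by (auto simp: presented_monoid_def)
next
  fix x y z
  assume "x \<in> carrier (presented_monoid A R)" "y \<in> carrier (presented_monoid A R)"
    "z \<in> carrier (presented_monoid A R)"
  then obtain u v w where "u \<in> lists A" "v \<in> lists A" "w \<in> lists A"
    and "x = pres_class A R u" "y = pres_class A R v" "z = pres_class A R w"
    by (auto simp: presented_monoid_def)
  then show "x \<otimes>\<^bsub>presented_monoid A R\<^esub> y \<in> carrier (presented_monoid A R)"
    and "x \<otimes>\<^bsub>presented_monoid A R\<^esub> y \<otimes>\<^bsub>presented_monoid A R\<^esub> z =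
         x \<otimes>\<^bsub>presented_monoid A R\<^esub> (y \<otimes>\<^bsub>presented_monoid A R\<^esub> z)"
    and "\<one>\<^bsub>presented_monoid A R\<^esub> \<otimes>\<^bsub>presented_monoid A R\<^esub> x = x"
    and "x \<otimes>\<^bsub>presented_monoid A R\<^esub> \<one>\<^bsub>presented_monoid A R\<^esub> = x"
    by (simp_all add: presented_monoid_mult presented_monoid_one)
      (auto simp: presented_monoid_def)
qed

text \<open>The bicyclic monoid with zero: \<open>Some (i, j)\<close> stands for \<open>b\<^sup>i a\<^sup>j\<close> and \<open>None\<close> for the zero.
  In \<open>b\<^sup>i a\<^sup>j b\<^sup>k a\<^sup>l\<close> the relation \<open>ab = 1\<close> cancels \<open>min j k\<close> letters in the middle.
  As letters of words, \<open>0\<close> is \<open>a\<close>, \<open>1\<close> is \<open>b\<close> and \<open>2\<close> is the zero.\<close>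

fun bicyclic_mult :: "(nat \<times> nat) option \<Rightarrow> (nat \<times> nat) option \<Rightarrow> (nat \<times> nat) option" where
  "bicyclic_mult (Some (i, j)) (Some (k, l)) = Some (i + (k - j), l + (j - k))"
| "bicyclic_mult _ _ = None"

lemma bicyclic_mult_None_right [simp]: "bicyclic_mult m None = None"
  by (cases m) auto

lemma bicyclic_mult_one_left [simp]: "bicyclic_mult (Some (0, 0)) m = m"
  by (cases m) auto

lemma bicyclic_mult_assoc:
  "bicyclic_mult (bicyclic_mult x y) z = bicyclic_mult x (bicyclic_mult y z)"
  by (cases x; cases y; cases z) auto

definition bicyclic_letter :: "nat \<Rightarrow> (nat \<times> nat) option" where
  "bicyclic_letter c = (if c = 0 then Some (0, 1) else if c = 1 then Some (1, 0) else None)"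

definition bicyclic_eval :: "nat list \<Rightarrow> (nat \<times> nat) option" where
  "bicyclic_eval w = foldr (\<lambda>c. bicyclic_mult (bicyclic_letter c)) w (Some (0, 0))"

lemma bicyclic_eval_Nil [simp]: "bicyclic_eval [] = Some (0, 0)"
  by (simp add: bicyclic_eval_def)

lemma bicyclic_eval_Cons [simp]:
  "bicyclic_eval (c # w) = bicyclic_mult (bicyclic_letter c) (bicyclic_eval w)"
  by (simp add: bicyclic_eval_def)

lemma bicyclic_eval_append:
  "bicyclic_eval (u @ v) = bicyclic_mult (bicyclic_eval u) (bicyclic_eval v)"
  by (induction u) (auto simp: bicyclic_mult_assoc)

definition bicyclic_gens :: "nat set" where
  "bicyclic_gens = {0, 1, 2}"

definition bicyclic_rels :: "(nat list \<times> nat list) set" where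
  "bicyclic_rels = {([0, 1], []), ([2, 0], [2]), ([0, 2], [2]), ([2, 1], [2]), ([1, 2], [2]),
                    ([2, 2], [2])}"

definition bicyclic_word :: "(nat \<times> nat) option \<Rightarrow> nat list" where
  "bicyclic_word m = (case m of None \<Rightarrow> [2] | Some (i, j) \<Rightarrow> replicate i 1 @ replicate j 0)"

lemma bicyclic_word_in_lists: "bicyclic_word m \<in> lists bicyclic_gens"
  by (cases m) (auto simp: bicyclic_word_def bicyclic_gens_def)

lemma bicyclic_eval_word [simp]: "bicyclic_eval (bicyclic_word m) = m"
proof -
  have "bicyclic_eval (replicate i 1) = Some (i, 0)" for i
    by (induction i) (auto simp: bicyclic_letter_def)
  moreover have "bicyclic_eval (replicate j 0) = Some (0, j)" for j
    by (induction j) (auto simp: bicyclic_letter_def)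
  ultimately show ?thesis
    by (cases m) (auto simp: bicyclic_word_def bicyclic_eval_append bicyclic_letter_def)
qed

lemma bicyclic_eval_respects_cong:
  "pres_cong bicyclic_rels u v \<Longrightarrow> bicyclic_eval u = bicyclic_eval v"
  by (induction rule: pres_cong.induct)
    (auto simp: bicyclic_rels_def bicyclic_letter_def bicyclic_eval_append)

lemma zero_absorbs_units:
  "set w \<subseteq> {0, 1} \<Longrightarrow> pres_cong bicyclic_rels (2 # w @ v) (2 # v)"
proof (induction w)
  case Nil
  then show ?case by (simp add: pc_refl)
next
  case (Cons c w)
  then have "pres_cong bicyclic_rels ([2, c] @ w @ v) ([2] @ w @ v)"
    by (intro pres_cong_rel_prefix) (auto simp: bicyclic_rels_def)
  with Cons show ?case by (auto intro: pc_trans)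
qed

lemma cong_Cons_bicyclic_word:
  assumes "c \<in> bicyclic_gens"
  shows "pres_cong bicyclic_rels (c # bicyclic_word m)
           (bicyclic_word (bicyclic_mult (bicyclic_letter c) m))"
proof (cases m)
  case None
  then show ?thesis
    using assms pc_rel[of "[c, 2]" "[2]" bicyclic_rels]
    by (auto simp: bicyclic_word_def bicyclic_gens_def bicyclic_rels_def bicyclic_letter_def)
next
  case (Some p)
  then obtain i j where m: "m = Some (i, j)" by (cases p) auto
  consider "c = 0" "i = 0" | i' where "c = 0" "i = Suc i'" | "c = 1" | "c = 2"
    using assms by (cases i) (auto simp: bicyclic_gens_def)
  then show ?thesis
  proof cases
    case 1
    then show ?thesis using m
      by (simp add: bicyclic_word_def bicyclic_letter_def pc_refl flip: replicate_append_same)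
  next
    case (2 i')
    have "pres_cong bicyclic_rels ([0, 1] @ replicate i' 1 @ replicate j 0)
                                  ([] @ replicate i' 1 @ replicate j 0)"
      by (rule pres_cong_rel_prefix) (simp add: bicyclic_rels_def)
    then show ?thesis using 2 m by (simp add: bicyclic_word_def bicyclic_letter_def)
  next
    case 3
    then show ?thesis using m by (simp add: bicyclic_word_def bicyclic_letter_def pc_refl)
  next
    case 4
    have "set (replicate i 1 @ replicate j 0) \<subseteq> {0, 1}" by auto
    from zero_absorbs_units[OF this, of "[]"] show ?thesis
      using 4 m by (simp add: bicyclic_word_def bicyclic_letter_def)
  qed
qed

lemma cong_bicyclic_word:
  "u \<in> lists bicyclic_gens \<Longrightarrow> pres_cong bicyclic_rels u (bicyclic_word (bicyclic_eval u))"
proof (induction u)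
  case Nil
  then show ?case by (simp add: bicyclic_word_def pc_refl)
next
  case (Cons c w)
  then have "pres_cong bicyclic_rels (c # w) (c # bicyclic_word (bicyclic_eval w))"
    by (auto intro: pres_cong_Cons)
  then show ?case using cong_Cons_bicyclic_word[of c "bicyclic_eval w"] Cons.prems
    by (auto intro: pc_trans)
qed

lemma bicyclic_cong_iff:
  "u \<in> lists bicyclic_gens \<Longrightarrow> v \<in> lists bicyclic_gens \<Longrightarrow>
     pres_cong bicyclic_rels u v \<longleftrightarrow> bicyclic_eval u = bicyclic_eval v"
  by (metis bicyclic_eval_respects_cong cong_bicyclic_word pc_sym pc_trans)

abbreviation bicyclic0 :: "nat list set monoid" where
  "bicyclic0 \<equiv> presented_monoid bicyclic_gens bicyclic_rels"

definition bicyclic_elem :: "(nat \<times> nat) option \<Rightarrow> nat list set" where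
  "bicyclic_elem m = pres_class bicyclic_gens bicyclic_rels (bicyclic_word m)"

lemma pres_class_bicyclic:
  assumes "u \<in> lists bicyclic_gens"
  shows "pres_class bicyclic_gens bicyclic_rels u = bicyclic_elem (bicyclic_eval u)"
  unfolding bicyclic_elem_def
  using pres_class_eq_iff[OF assms bicyclic_word_in_lists] bicyclic_cong_iff[OF assms]
  by (simp add: bicyclic_word_in_lists)

lemma carrier_bicyclic0: "carrier bicyclic0 = range bicyclic_elem"
proof -
  have "carrier bicyclic0 = bicyclic_elem ` bicyclic_eval ` lists bicyclic_gens"
    by (auto simp: presented_monoid_def pres_class_bicyclic image_image)
  moreover have "bicyclic_eval ` lists bicyclic_gens = UNIV"
    using bicyclic_eval_word bicyclic_word_in_lists by (metis UNIV_eq_I image_eqI)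
  ultimately show ?thesis by simp
qed

lemma bicyclic_elem_eq_iff [simp]: "bicyclic_elem m = bicyclic_elem n \<longleftrightarrow> m = n"
  unfolding bicyclic_elem_def
  by (simp add: pres_class_eq_iff bicyclic_cong_iff bicyclic_word_in_lists)

lemma bicyclic0_mult [simp]:
  "bicyclic_elem m \<otimes>\<^bsub>bicyclic0\<^esub> bicyclic_elem n = bicyclic_elem (bicyclic_mult m n)"
proof -
  have "bicyclic_elem m \<otimes>\<^bsub>bicyclic0\<^esub> bicyclic_elem n
          = pres_class bicyclic_gens bicyclic_rels (bicyclic_word m @ bicyclic_word n)"
    unfolding bicyclic_elem_def by (intro presented_monoid_mult bicyclic_word_in_lists)
  also have "\<dots> = bicyclic_elem (bicyclic_mult m n)"
    by (simp add: pres_class_bicyclic bicyclic_word_in_lists bicyclic_eval_append)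
  finally show ?thesis .
qed

lemma bicyclic0_one [simp]: "\<one>\<^bsub>bicyclic0\<^esub> = bicyclic_elem (Some (0, 0))"
  using pres_class_bicyclic[of "[]"] by (simp add: presented_monoid_one)

definition bicyclic_inv :: "(nat \<times> nat) option \<Rightarrow> (nat \<times> nat) option" where
  "bicyclic_inv m = map_option (\<lambda>(i, j). (j, i)) m"

lemma bicyclic_inv_unique:
  "m = bicyclic_mult (bicyclic_mult m n) m \<and> n = bicyclic_mult (bicyclic_mult n m) n
     \<longleftrightarrow> n = bicyclic_inv m"
  by (cases m; cases n) (auto simp: bicyclic_inv_def)

lemma inverse_monoid_bicyclic0: "inverse_monoid bicyclic0"
  unfolding inverse_monoid_def
proof (intro conjI monoid_presented_monoid ballI)
  fix s assume "s \<in> carrier bicyclic0"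
  then obtain m where s: "s = bicyclic_elem m" by (auto simp: carrier_bicyclic0)
  have inverse_iff: "s = s \<otimes>\<^bsub>bicyclic0\<^esub> bicyclic_elem n \<otimes>\<^bsub>bicyclic0\<^esub> s
      \<and> bicyclic_elem n = bicyclic_elem n \<otimes>\<^bsub>bicyclic0\<^esub> s \<otimes>\<^bsub>bicyclic0\<^esub> bicyclic_elem n
      \<longleftrightarrow> n = bicyclic_inv m" for n
    by (simp add: s bicyclic_inv_unique)
  show "\<exists>!x. x \<in> carrier bicyclic0 \<and> s = s \<otimes>\<^bsub>bicyclic0\<^esub> x \<otimes>\<^bsub>bicyclic0\<^esub> s
               \<and> x = x \<otimes>\<^bsub>bicyclic0\<^esub> s \<otimes>\<^bsub>bicyclic0\<^esub> x"
  proof (rule ex1I[of _ "bicyclic_elem (bicyclic_inv m)"])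
    fix x
    assume x: "x \<in> carrier bicyclic0 \<and> s = s \<otimes>\<^bsub>bicyclic0\<^esub> x \<otimes>\<^bsub>bicyclic0\<^esub> s
                 \<and> x = x \<otimes>\<^bsub>bicyclic0\<^esub> s \<otimes>\<^bsub>bicyclic0\<^esub> x"
    then obtain n where "x = bicyclic_elem n" by (auto simp: carrier_bicyclic0)
    with x inverse_iff[of n] show "x = bicyclic_elem (bicyclic_inv m)" by simp
  qed (use inverse_iff in \<open>simp add: carrier_bicyclic0\<close>)
qed

lemma amenable_monoid_if_zero:
  assumes z: "z \<in> carrier M"
    and absorbs: "\<And>x. x \<in> carrier M \<Longrightarrow> x \<otimes>\<^bsub>M\<^esub> z = z \<and> z \<otimes>\<^bsub>M\<^esub> x = z"
  shows "amenable_monoid M"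
  unfolding amenable_monoid_def
proof (intro exI[of _ "\<lambda>f. f z"] conjI ballI allI impI)
  show "is_mean M (\<lambda>f. f z)"
    unfolding is_mean_def
  proof (intro conjI allI impI)
    fix f :: "'a \<Rightarrow> real" assume "linf_bdd M f"
    then have "bdd_above ((\<lambda>x. \<bar>f x\<bar>) ` carrier M)"
      by (auto simp: linf_bdd_def intro: bdd_aboveI2)
    then show "\<bar>f z\<bar> \<le> linf_norm M f"
      unfolding linf_norm_def using z by (rule cSUP_upper2) simp
  qed (use z in auto)
qed (simp_all add: absorbs)

lemma hamming_triangle:
  assumes "finite X"
  shows "hamming X f h \<le> hamming X f g + hamming X g h"
proof -
  have "card {x \<in> X. f x \<noteq> h x} \<le> card ({x \<in> X. f x \<noteq> g x} \<union> {x \<in> X. g x \<noteq> h x})"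
    by (rule card_mono) (use assms in auto)
  also have "\<dots> \<le> card {x \<in> X. f x \<noteq> g x} + card {x \<in> X. g x \<noteq> h x}"
    by (rule card_Un_le)
  finally have "card {x \<in> X. f x \<noteq> h x} \<le> card {x \<in> X. f x \<noteq> g x} + card {x \<in> X. g x \<noteq> h x}" .
  then show ?thesis
    unfolding hamming_def by (simp add: divide_right_mono flip: add_divide_distrib)
qed

lemma hamming_sym: "hamming X f g = hamming X g f"
  unfolding hamming_def by (simp add: eq_commute)

lemma hamming_comp_swap_id:
  assumes X: "finite X" and qX: "q ` X \<subseteq> X"
  shows "hamming X (q \<circ> p) id \<le> hamming X (p \<circ> q) id"
proof -
  define Y where "Y = {x \<in> X. p (q x) = x}"
  have "inj_on q Y" by (metis (mono_tags, lifting) Y_def inj_onI mem_Collect_eq)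
  then have card_qY: "card (q ` Y) = card Y" by (rule card_image)
  have "q ` Y \<subseteq> X" using qX by (auto simp: Y_def)
  then have "card (X - q ` Y) = card (X - Y)"
    using X card_qY by (simp add: card_Diff_subset finite_subset Y_def)
  moreover have "{x \<in> X. (q \<circ> p) x \<noteq> id x} \<subseteq> X - q ` Y" by (auto simp: Y_def)
  moreover have "X - Y = {x \<in> X. (p \<circ> q) x \<noteq> id x}" by (auto simp: Y_def)
  ultimately have "card {x \<in> X. (q \<circ> p) x \<noteq> id x} \<le> card {x \<in> X. (p \<circ> q) x \<noteq> id x}"
    using X by (metis card_mono finite_Diff)
  then show ?thesis unfolding hamming_def by (simp add: divide_right_mono)
qed

lemma sofic_monoid_directly_finite:
  assumes sofic: "sofic_monoid M" and "monoid M"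
    and a: "a \<in> carrier M" and b: "b \<in> carrier M" and ab: "a \<otimes>\<^bsub>M\<^esub> b = \<one>\<^bsub>M\<^esub>"
  shows "b \<otimes>\<^bsub>M\<^esub> a = \<one>\<^bsub>M\<^esub>"
proof (rule ccontr)
  assume ba: "b \<otimes>\<^bsub>M\<^esub> a \<noteq> \<one>\<^bsub>M\<^esub>"
  define K where "K = {a, b, \<one>\<^bsub>M\<^esub>, b \<otimes>\<^bsub>M\<^esub> a}"
  have "finite K" "K \<subseteq> carrier M"
    using a b \<open>monoid M\<close> by (simp_all add: K_def monoid.m_closed monoid.one_closed)
  then obtain X and \<phi> :: "'a \<Rightarrow> nat \<Rightarrow> nat" where
    X: "finite X" and maps: "\<forall>m \<in> carrier M. \<phi> m ` X \<subseteq> X"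
    and morph: "\<forall>k1 \<in> K. \<forall>k2 \<in> K. hamming X (\<phi> (k1 \<otimes>\<^bsub>M\<^esub> k2)) (\<phi> k1 \<circ> \<phi> k2) \<le> 1/10"
    and unit: "hamming X (\<phi> \<one>\<^bsub>M\<^esub>) id \<le> 1/10"
    and inj: "\<forall>k1 \<in> K. \<forall>k2 \<in> K. k1 \<noteq> k2 \<longrightarrow> hamming X (\<phi> k1) (\<phi> k2) \<ge> 1 - 1/10"
    using sofic unfolding sofic_monoid_def by (metis divide_pos_pos zero_less_numeral zero_less_one)
  have "hamming X (\<phi> \<one>\<^bsub>M\<^esub>) (\<phi> a \<circ> \<phi> b) \<le> 1/10"
    using morph[unfolded K_def, rule_format, of a b] ab by simp
  then have "hamming X (\<phi> a \<circ> \<phi> b) id \<le> 2/10"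
    using hamming_triangle[OF X, where f = "\<phi> a \<circ> \<phi> b" and g = "\<phi> \<one>\<^bsub>M\<^esub>" and h = id] unit
      hamming_sym[of X "\<phi> a \<circ> \<phi> b" "\<phi> \<one>\<^bsub>M\<^esub>"] by linarith
  then have "hamming X (\<phi> b \<circ> \<phi> a) id \<le> 2/10"
    using hamming_comp_swap_id[OF X, of "\<phi> b" "\<phi> a"] maps b by fastforce
  moreover have "hamming X (\<phi> (b \<otimes>\<^bsub>M\<^esub> a)) (\<phi> b \<circ> \<phi> a) \<le> 1/10"
    using morph[unfolded K_def, rule_format, of b a] by simp
  ultimately have "hamming X (\<phi> (b \<otimes>\<^bsub>M\<^esub> a)) (\<phi> \<one>\<^bsub>M\<^esub>) \<le> 4/10"
    using hamming_triangle[OF X, where f = "\<phi> (b \<otimes>\<^bsub>M\<^esub> a)" and g = "\<phi> b \<circ> \<phi> a" and h = id]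
      hamming_triangle[OF X, where f = "\<phi> (b \<otimes>\<^bsub>M\<^esub> a)" and g = id and h = "\<phi> \<one>\<^bsub>M\<^esub>"] unit
      hamming_sym[of X id "\<phi> \<one>\<^bsub>M\<^esub>"] by linarith
  moreover have "hamming X (\<phi> (b \<otimes>\<^bsub>M\<^esub> a)) (\<phi> \<one>\<^bsub>M\<^esub>) \<ge> 1 - 1/10"
    using inj[unfolded K_def, rule_format, of "b \<otimes>\<^bsub>M\<^esub> a" "\<one>\<^bsub>M\<^esub>"] ba by simp
  ultimately show False by simp
qed

theorem corollary5p5:
  shows "\<exists>A R. finite_presentation A R \<and>
           inverse_monoid (presented_monoid A R) \<and>
           amenable_monoid (presented_monoid A R) \<and>
           \<not> sofic_monoid (presented_monoid A R)"
proof (intro exI conjI)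
  show "finite_presentation bicyclic_gens bicyclic_rels"
    by (auto simp: finite_presentation_def bicyclic_gens_def bicyclic_rels_def)
  show "inverse_monoid bicyclic0" by (rule inverse_monoid_bicyclic0)
  show "amenable_monoid bicyclic0"
    by (rule amenable_monoid_if_zero[of "bicyclic_elem None"]) (auto simp: carrier_bicyclic0)
  show "\<not> sofic_monoid bicyclic0"
  proof
    assume "sofic_monoid bicyclic0"
    then have "bicyclic_elem (Some (1, 0)) \<otimes>\<^bsub>bicyclic0\<^esub> bicyclic_elem (Some (0, 1)) = \<one>\<^bsub>bicyclic0\<^esub>"
      by (rule sofic_monoid_directly_finite[OF _ monoid_presented_monoid])
        (auto simp: carrier_bicyclic0)
    then show False by simp
  qed
qed

end
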